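(* Let $N\ge2$, $K>0$, $k_n=\lfloor Kn\log n\rfloor$, and let $0<b<2K-\frac{1}{\log N}$. Consider the random graph on $\Omega_N$ where distinct $x,y$ with $d(x,y)=k$ are joined independently with probability $\min(c_k/N^{2k},1)$, where $c_{k_n}=C+a\log n\cdot N^{b\log n}$ for all $n$ (constants $C\ge0$, $a>0$) and $c_{k_n}\le c_j\le c_{k_{n+1}}$ for $k_n<j<k_{n+1}$. For $j\ge2$ let $A_{n,j}$ denote the event that the cluster $X_{k_n}=X(B_{k_n})$ of a $k_n$-ball $B_{k_n}$ is joined by an edge to the $(k_{n+j},k_{n+j+1}]$-annulus around $B_{k_n}$. Then there is a positive constant $M$ such that for each $j\ge 2$ $$\limsup_{n\to\infty}\frac{P(A_{n,j})}{M\log n / n^{(Kj-b)\log N}}\le 1,$$ and $\sum_{n=1}^\infty\sum_{j=2}^\infty P(A_{n,j})<\infty$. Hence, with probability $1$, there exists a random $n_0$ such that for all $n\ge n_0$ there are no edges between the cluster $X_{k_n}$ restricted to the $(k_{n-1},k_n]$-annulus and the annuli $(k_{n+2},k_{n+3}]$, $(k_{n+3},k_{n+4}]$, etc.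
   Context: $\Omega_N$ is the set of sequences with entries in $\{0,\dots,N-1\}$, finitely many nonzero; $d(x,y)=\max\{i:x_i\ne y_i\}$ for $x\ne y$, $d(x,x)=0$. A $k$-ball is $\{y:d(x,y)\le k\}$; $B_k$ denotes the $k$-ball containing the zero sequence $\mathbf 0$. The $(j,\ell]$-annulus around a ball $B\subset B_j$ is $\{y: j<d(x,y)\le \ell\}$ for any $x\in B$. Edges are independent. For a $k$-ball $B$, $X(B)$ is the largest connected component of the subgraph induced on $B$ (only edges with both endpoints in $B$), ties broken uniformly at random. *)

theory Defs
  imports "HOL-Probability.Probability"
begin

type_synonym seq = "nat \<Rightarrow> nat"

text \<open>Omega_N: sequences (x_1, x_2, ...) with entries in {0..N-1}, finitely many nonzero.
  Indices start at 1; the unused coordinate 0 is fixed to 0.\<close>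
definition Omega :: "nat \<Rightarrow> seq set" where
  "Omega N = {x. x 0 = 0 \<and> (\<forall>i. x i < N) \<and> finite {i. x i \<noteq> 0}}"

definition ud :: "seq \<Rightarrow> seq \<Rightarrow> nat" where
  "ud x y = (if x = y then 0 else Max {i. x i \<noteq> y i})"

definition zero_seq :: seq where "zero_seq = (\<lambda>_. 0)"

definition zball :: "nat \<Rightarrow> nat \<Rightarrow> seq set" where
  "zball N k = {y \<in> Omega N. ud zero_seq y \<le> k}"

text \<open>(j,l]-annulus around a ball contained in B_j (computed from the centre 0).\<close>
definition annulus :: "nat \<Rightarrow> nat \<Rightarrow> nat \<Rightarrow> seq set" where
  "annulus N j l = {y \<in> Omega N. j < ud zero_seq y \<and> ud zero_seq y \<le> l}"

definition edges :: "nat \<Rightarrow> seq set set" where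
  "edges N = {{x, y} | x y. x \<in> Omega N \<and> y \<in> Omega N \<and> x \<noteq> y}"

definition edist :: "seq set \<Rightarrow> nat" where
  "edist e = Max {i. \<exists>x\<in>e. \<exists>y\<in>e. x i \<noteq> y i}"

definition edge_prob :: "nat \<Rightarrow> (nat \<Rightarrow> real) \<Rightarrow> seq set \<Rightarrow> real" where
  "edge_prob N c e = min (c (edist e) / real N ^ (2 * edist e)) 1"

definition edge_space :: "nat \<Rightarrow> (nat \<Rightarrow> real) \<Rightarrow> (seq set \<Rightarrow> bool) measure" where
  "edge_space N c = PiM (edges N) (\<lambda>e. measure_pmf (bernoulli_pmf (edge_prob N c e)))"

text \<open>Tie-breaking randomness: for each k, an independent uniformly random ranking of B_k.\<close>
definition rankings :: "nat \<Rightarrow> nat \<Rightarrow> (seq \<Rightarrow> nat) set" where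
  "rankings N k = {f. bij_betw f (zball N k) {..<card (zball N k)} \<and> (\<forall>x. x \<notin> zball N k \<longrightarrow> f x = 0)}"

definition tie_space :: "nat \<Rightarrow> (nat \<Rightarrow> seq \<Rightarrow> nat) measure" where
  "tie_space N = PiM UNIV (\<lambda>k. measure_pmf (pmf_of_set (rankings N k)))"

definition rg_space :: "nat \<Rightarrow> (nat \<Rightarrow> real) \<Rightarrow> ((seq set \<Rightarrow> bool) \<times> (nat \<Rightarrow> seq \<Rightarrow> nat)) measure" where
  "rg_space N c = pair_measure (edge_space N c) (tie_space N)"

definition adj :: "(seq set \<Rightarrow> bool) \<Rightarrow> seq \<Rightarrow> seq \<Rightarrow> bool" where
  "adj w x y = (x \<noteq> y \<and> w {x, y})"

definition comp :: "(seq set \<Rightarrow> bool) \<Rightarrow> seq set \<Rightarrow> seq \<Rightarrow> seq set" where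
  "comp w B x = {y. (x, y) \<in> {(u, v). u \<in> B \<and> v \<in> B \<and> adj w u v}\<^sup>*}"

definition largest_comps :: "(seq set \<Rightarrow> bool) \<Rightarrow> seq set \<Rightarrow> seq set set" where
  "largest_comps w B = {C \<in> comp w B ` B. \<forall>C' \<in> comp w B ` B. card C' \<le> card C}"

text \<open>X(B_k): a largest component of B_k; ties broken by the component containing the
  lowest-ranked vertex (under the uniform random ranking t k) among the largest components.
  Since tied components have equal size, this selects uniformly among them.\<close>
definition cluster :: "nat \<Rightarrow> (seq set \<Rightarrow> bool) \<Rightarrow> (nat \<Rightarrow> seq \<Rightarrow> nat) \<Rightarrow> nat \<Rightarrow> seq set" where
  "cluster N w t k = comp w (zball N k)
     (arg_min (t k) (\<lambda>v. v \<in> \<Union>(largest_comps w (zball N k))))"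

definition kseq :: "real \<Rightarrow> nat \<Rightarrow> nat" where
  "kseq K n = nat \<lfloor>K * real n * ln (real n)\<rfloor>"

definition A_event :: "nat \<Rightarrow> (nat \<Rightarrow> real) \<Rightarrow> real \<Rightarrow> nat \<Rightarrow> nat \<Rightarrow>
    ((seq set \<Rightarrow> bool) \<times> (nat \<Rightarrow> seq \<Rightarrow> nat)) set" where
  "A_event N c K n j = {(w, t) \<in> space (rg_space N c).
      \<exists>x \<in> cluster N w t (kseq K n). \<exists>y \<in> annulus N (kseq K (n + j)) (kseq K (n + j + 1)).
        adj w x y}"

end

theory Submission
  imports Defs
begin

text \<open>The cluster \<open>X_{k_n}\<close> lies in \<open>B_{k_n}\<close>, so whatever the tie-breaking, \<open>A_{n,j}\<close> requires
  an edge between one of the at most \<open>N^{k_n}\<close> points of \<open>B_{k_n}\<close> and the annulus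
  \<open>(k_{n+j}, k_{n+j+1}]\<close>. A point at distance \<open>d\<close> is joined with probability at most
  \<open>c_{k_{n+j+1}} N^{-2d}\<close> and there are at most \<open>N^d\<close> such points, so the union bound gives
  \<open>P(A_{n,j}) \<le> N^{k_n - k_{n+j}} c_{k_{n+j+1}}\<close>. With \<open>k_n \<approx> K n log n\<close> and
  \<open>c_{k_m} \<approx> a log m \<cdot> m^{b log N}\<close> this is \<open>O(log m / m^{(K j - b) log N})\<close> for \<open>m = n + j\<close>,
  which yields the limsup bound. For \<open>j \<ge> 2\<close> the exponent is at least \<open>(2K - b) log N > 1\<close>, so
  the double series converges and Borel--Cantelli gives the almost sure statement.\<close>

lemma ud_zero_seq_eq_Max:
  assumes "y \<noteq> zero_seq"
  shows "ud zero_seq y = Max {i. y i \<noteq> 0}"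
proof -
  have "{i. zero_seq i \<noteq> y i} = {i. y i \<noteq> 0}" by (auto simp: zero_seq_def)
  then show ?thesis using assms by (simp add: ud_def)
qed

lemma ud_zero_seq_le_iff:
  assumes "finite {i. y i \<noteq> 0}"
  shows "ud zero_seq y \<le> d \<longleftrightarrow> (\<forall>i>d. y i = 0)"
proof (cases "y = zero_seq")
  case True
  then show ?thesis by (simp add: ud_def zero_seq_def)
next
  case False
  then have "{i. y i \<noteq> 0} \<noteq> {}" by (auto simp: zero_seq_def fun_eq_iff)
  moreover have "(\<forall>i\<in>{i. y i \<noteq> 0}. i \<le> d) \<longleftrightarrow> (\<forall>i>d. y i = 0)"
    using not_le by blast
  ultimately show ?thesis
    unfolding ud_zero_seq_eq_Max[OF False] using Max_le_iff[OF assms] by blast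
qed

lemma ud_zero_seq_nonzero:
  assumes "finite {i. y i \<noteq> 0}" and "y \<noteq> zero_seq"
  shows "y (ud zero_seq y) \<noteq> 0"
proof -
  have "{i. y i \<noteq> 0} \<noteq> {}" using assms(2) by (auto simp: zero_seq_def fun_eq_iff)
  then show ?thesis unfolding ud_zero_seq_eq_Max[OF assms(2)] using Max_in[OF assms(1)] by auto
qed

lemma finite_support_Omega: "y \<in> Omega N \<Longrightarrow> finite {i. y i \<noteq> 0}"
  by (simp add: Omega_def)

lemma edist_insert_outer:
  assumes x: "x \<in> Omega N" "ud zero_seq x \<le> k" and y: "y \<in> Omega N" "k < ud zero_seq y"
  shows "edist {x, y} = ud zero_seq y"
proof -
  let ?d = "ud zero_seq y"
  have x0: "\<forall>i>k. x i = 0"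
    using ud_zero_seq_le_iff[OF finite_support_Omega[OF x(1)]] x(2) by blast
  have y0: "\<forall>i>?d. y i = 0"
    using ud_zero_seq_le_iff[OF finite_support_Omega[OF y(1)]] by blast
  have "y \<noteq> zero_seq" using y(2) by (intro notI) (simp add: ud_def)
  then have yd: "y ?d \<noteq> 0" by (rule ud_zero_seq_nonzero[OF finite_support_Omega[OF y(1)]])
  have le: "i \<le> ?d" if "x i \<noteq> y i" for i
  proof (rule ccontr)
    assume "\<not> i \<le> ?d"
    then show False using that x0 y0 y(2) by auto
  qed
  have fin: "finite {i. x i \<noteq> y i}" by (rule finite_subset[of _ "{..?d}"]) (auto dest: le)
  have "Max {i. x i \<noteq> y i} = ?d"
    by (rule Max_eqI[OF fin]) (use le yd x0 y(2) in auto)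
  moreover have "{i. \<exists>u\<in>{x, y}. \<exists>v\<in>{x, y}. u i \<noteq> v i} = {i. x i \<noteq> y i}" by auto
  ultimately show ?thesis unfolding edist_def by simp
qed

lemma zball_subset_image_PiE:
  "zball N d \<subseteq> (\<lambda>f i. if i \<in> {1..d} then f i else 0) ` PiE {1..d} (\<lambda>_. {..<N})"
proof
  fix y assume y: "y \<in> zball N d"
  then have yO: "y \<in> Omega N" and "ud zero_seq y \<le> d" by (auto simp: zball_def)
  then have y0: "\<forall>i>d. y i = 0" using ud_zero_seq_le_iff[OF finite_support_Omega[OF yO]] by blast
  have "y = (\<lambda>i. if i \<in> {1..d} then restrict y {1..d} i else 0)"
  proof
    fix i show "y i = (if i \<in> {1..d} then restrict y {1..d} i else 0)"
      using y0 yO by (cases "i = 0") (auto simp: Omega_def)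
  qed
  moreover have "restrict y {1..d} \<in> PiE {1..d} (\<lambda>_. {..<N})" using yO by (auto simp: Omega_def)
  ultimately show "y \<in> (\<lambda>f i. if i \<in> {1..d} then f i else 0) ` PiE {1..d} (\<lambda>_. {..<N})"
    by blast
qed

lemma finite_zball: "finite (zball N d)"
  by (rule finite_subset[OF zball_subset_image_PiE]) (auto intro!: finite_PiE)

lemma card_zball_le: "card (zball N d) \<le> N ^ d"
proof -
  have "card (zball N d) \<le> card ((\<lambda>f i. if i \<in> {1..d} then f i else 0) ` PiE {1..d} (\<lambda>_. {..<N}))"
    by (rule card_mono[OF _ zball_subset_image_PiE]) (auto intro!: finite_PiE)
  also have "\<dots> \<le> card (PiE {1..d} (\<lambda>_. {..<N}))"
    by (rule card_image_le) (auto intro!: finite_PiE)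
  also have "\<dots> = N ^ d" by (simp add: card_PiE)
  finally show ?thesis .
qed

lemma zero_seq_in_zball: "N \<ge> 1 \<Longrightarrow> zero_seq \<in> zball N k"
  by (simp add: zball_def Omega_def zero_seq_def ud_def)

lemma zball_subset_Omega: "zball N k \<subseteq> Omega N"
  by (auto simp: zball_def)

lemma annulus_subset_Omega: "annulus N j l \<subseteq> Omega N"
  by (auto simp: annulus_def)

lemma finite_annulus: "finite (annulus N j l)"
  by (rule finite_subset[OF _ finite_zball[of N l]]) (auto simp: annulus_def zball_def)

lemma comp_subset:
  assumes "x \<in> B"
  shows "comp w B x \<subseteq> B"
proof
  fix y assume "y \<in> comp w B x"
  then have "(x, y) \<in> {(u, v). u \<in> B \<and> v \<in> B \<and> adj w u v}\<^sup>*" by (simp add: comp_def)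
  then show "y \<in> B" by (induct rule: rtrancl_induct) (use assms in auto)
qed

lemma cluster_subset_zball:
  assumes "N \<ge> 1"
  shows "cluster N w t k \<subseteq> zball N k"
proof -
  let ?B = "zball N k"
  let ?S = "comp w ?B ` ?B"
  let ?L = "\<Union>(largest_comps w ?B)"
  have fin: "finite (card ` ?S)" using finite_zball by simp
  have "card ` ?S \<noteq> {}" using zero_seq_in_zball[OF assms] by blast
  then have "Max (card ` ?S) \<in> card ` ?S" by (rule Max_in[OF fin])
  then obtain u where u: "u \<in> ?B" "card (comp w ?B u) = Max (card ` ?S)"
    by (metis (no_types, lifting) image_iff)
  have "comp w ?B u \<in> largest_comps w ?B"
    using u fin by (auto simp: largest_comps_def)
  moreover have "u \<in> comp w ?B u" by (simp add: comp_def)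
  ultimately have "u \<in> ?L" by blast
  then have "arg_min (t k) (\<lambda>v. v \<in> ?L) \<in> ?L" by (rule arg_min_natI[of _ u])
  then obtain v where "v \<in> ?B" "arg_min (t k) (\<lambda>v. v \<in> ?L) \<in> comp w ?B v"
    by (auto simp: largest_comps_def)
  then have "arg_min (t k) (\<lambda>v. v \<in> ?L) \<in> ?B" using comp_subset by blast
  then show ?thesis unfolding cluster_def by (rule comp_subset)
qed

lemma cluster_cong:
  assumes "\<forall>u\<in>zball N k. \<forall>v\<in>zball N k. adj w u v = adj w' u v" and "t k = t' k"
  shows "cluster N w t k = cluster N w' t' k"
proof -
  have "{(u, v). u \<in> zball N k \<and> v \<in> zball N k \<and> adj w u v} =
        {(u, v). u \<in> zball N k \<and> v \<in> zball N k \<and> adj w' u v}"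
    using assms(1) by auto
  then have "comp w (zball N k) = comp w' (zball N k)" unfolding comp_def by simp
  then show ?thesis using assms(2) by (simp add: cluster_def largest_comps_def)
qed

lemma prob_space_rg_space: "prob_space (rg_space N c)"
  unfolding rg_space_def edge_space_def tie_space_def
  by (intro prob_space_pair prob_space_PiM prob_space_measure_pmf)

lemma sets_rg_space_edge:
  assumes "e \<in> edges N"
  shows "{z \<in> space (rg_space N c). fst z e = b} \<in> sets (rg_space N c)"
proof -
  have "(\<lambda>z. fst z e) \<in> rg_space N c \<rightarrow>\<^sub>M measure_pmf (bernoulli_pmf (edge_prob N c e))"
    unfolding rg_space_def edge_space_def
    by (rule measurable_compose[OF measurable_fst measurable_component_singleton]) (rule assms)
  then show ?thesis by (rule measurable_sets_Collect) simp
qed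

lemma sets_rg_space_ranking: "{z \<in> space (rg_space N c). snd z k \<in> S} \<in> sets (rg_space N c)"
proof -
  have "(\<lambda>z. snd z k) \<in> rg_space N c \<rightarrow>\<^sub>M measure_pmf (pmf_of_set (rankings N k))"
    unfolding rg_space_def tie_space_def
    by (rule measurable_compose[OF measurable_snd measurable_component_singleton]) simp
  then show ?thesis by (rule measurable_sets_Collect) simp
qed

text \<open>An event determined by finitely many edges and by the ranking of one ball is a finite
  union of cylinders.\<close>

lemma sets_rg_space_finitely_determined:
  assumes F: "finite F" "F \<subseteq> edges N"
    and P: "\<And>z z'. \<forall>e\<in>F. fst z e = fst z' e \<Longrightarrow> snd z k = snd z' k \<Longrightarrow> P z = P z'"
  shows "{z \<in> space (rg_space N c). P z} \<in> sets (rg_space N c)"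
proof -
  let ?Sp = "space (rg_space N c)"
  define T where "T g = {r. \<exists>z\<in>?Sp. P z \<and> (\<forall>e\<in>F. fst z e = g e) \<and> snd z k = r}" for g
  have eq: "{z \<in> ?Sp. P z} =
    {z \<in> ?Sp. \<exists>g\<in>PiE F (\<lambda>_. UNIV). (\<forall>e\<in>F. fst z e = g e) \<and> snd z k \<in> T g}"
  proof (intro set_eqI iffI)
    fix z assume "z \<in> {z \<in> ?Sp. P z}"
    then show "z \<in> {z \<in> ?Sp. \<exists>g\<in>PiE F (\<lambda>_. UNIV). (\<forall>e\<in>F. fst z e = g e) \<and> snd z k \<in> T g}"
      unfolding T_def by (intro CollectI conjI bexI[of _ "restrict (fst z) F"]) auto
  next
    fix z assume "z \<in> {z \<in> ?Sp. \<exists>g\<in>PiE F (\<lambda>_. UNIV). (\<forall>e\<in>F. fst z e = g e) \<and> snd z k \<in> T g}"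
    then obtain g where z: "z \<in> ?Sp" "\<forall>e\<in>F. fst z e = g e" "snd z k \<in> T g" by auto
    then obtain z' where "P z'" "\<forall>e\<in>F. fst z' e = g e" "snd z' k = snd z k"
      unfolding T_def by auto
    then show "z \<in> {z \<in> ?Sp. P z}" using P[of z z'] z by auto
  qed
  have cyl: "{z \<in> ?Sp. \<forall>e\<in>F. fst z e = g e} \<in> sets (rg_space N c)" for g
  proof (cases "F = {}")
    case False
    show ?thesis
      by (rule sets.sets_Collect_finite_All'[OF _ F(1) False]) (use F(2) sets_rg_space_edge in blast)
  qed simp
  show ?thesis unfolding eq
    by (intro sets.sets_Collect_finite_Ex sets.sets_Collect_conj sets_rg_space_ranking cyl)
      (use F(1) in \<open>auto intro!: finite_PiE\<close>)
qed

definition cluster_joins ::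
    "nat \<Rightarrow> nat \<Rightarrow> seq set \<Rightarrow> (seq set \<Rightarrow> bool) \<Rightarrow> (nat \<Rightarrow> seq \<Rightarrow> nat) \<Rightarrow> bool" where "cluster_joins N k L w t \<longleftrightarrow> (\<exists>x \<in> cluster N w t k. \<exists>y \<in> L. adj w x y)"

lemma cluster_joins_cong:
  assumes "N \<ge> 1"
    and w: "\<forall>u \<in> zball N k \<union> L. \<forall>v \<in> zball N k \<union> L. u \<noteq> v \<longrightarrow> w {u, v} = w' {u, v}"
    and "t k = t' k"
  shows "cluster_joins N k L w t = cluster_joins N k L w' t'"
proof -
  have adj: "adj w u v = adj w' u v" if "u \<in> zball N k \<union> L" "v \<in> zball N k \<union> L" for u v
    using w that unfolding adj_def by blast
  then have "cluster N w t k = cluster N w' t' k"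
    by (intro cluster_cong) (use assms(3) in auto)
  then show ?thesis
    unfolding cluster_joins_def using adj cluster_subset_zball[OF assms(1)] by (smt (verit) UnI1 UnI2 subset_iff)
qed

lemma sets_cluster_joins:
  assumes "N \<ge> 1" and L: "finite L" "L \<subseteq> Omega N"
  shows "{z \<in> space (rg_space N c). cluster_joins N k L (fst z) (snd z)} \<in> sets (rg_space N c)"
proof (rule sets_rg_space_finitely_determined)
  let ?V = "zball N k \<union> L"
  let ?F = "{{u, v} | u v. u \<in> ?V \<and> v \<in> ?V \<and> u \<noteq> v}"
  have "?F \<subseteq> (\<lambda>(u, v). {u, v}) ` (?V \<times> ?V)" by auto
  moreover have "finite ?V" using L(1) finite_zball by simp
  ultimately show "finite ?F" by (meson finite_SigmaI finite_imageI finite_subset)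
  show "?F \<subseteq> edges N" using L(2) zball_subset_Omega unfolding edges_def by blast
  show "cluster_joins N k L (fst z) (snd z) = cluster_joins N k L (fst z') (snd z')"
    if "\<forall>e\<in>?F. fst z e = fst z' e" "snd z k = snd z' k" for z z'
    by (rule cluster_joins_cong[OF assms(1)]) (use that in blast)+
qed

lemma A_event_eq_cluster_joins:
  "A_event N c K n j = {z \<in> space (rg_space N c).
     cluster_joins N (kseq K n) (annulus N (kseq K (n + j)) (kseq K (n + j + 1))) (fst z) (snd z)}"
proof (rule set_eqI)
  fix z :: "(seq set \<Rightarrow> bool) \<times> (nat \<Rightarrow> seq \<Rightarrow> nat)"
  show "z \<in> A_event N c K n j \<longleftrightarrow> z \<in> {z \<in> space (rg_space N c).
      cluster_joins N (kseq K n) (annulus N (kseq K (n + j)) (kseq K (n + j + 1))) (fst z) (snd z)}"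
    by (cases z) (simp add: A_event_def cluster_joins_def)
qed

lemma sets_A_event: "N \<ge> 1 \<Longrightarrow> A_event N c K n j \<in> sets (rg_space N c)"
  unfolding A_event_eq_cluster_joins
  by (rule sets_cluster_joins[OF _ finite_annulus annulus_subset_Omega])

context
begin

interpretation pmf_as_function .

lemma pmf_bernoulli_True_le: "p \<le> q \<Longrightarrow> 0 \<le> q \<Longrightarrow> pmf (bernoulli_pmf p) True \<le> q"
  by transfer simp

end

lemma measure_rg_space_edge:
  assumes e: "e \<in> edges N"
  shows "measure (rg_space N c) {z \<in> space (rg_space N c). fst z e} =
    pmf (bernoulli_pmf (edge_prob N c e)) True"
proof -
  interpret T: prob_space "tie_space N"
    unfolding tie_space_def by (intro prob_space_PiM prob_space_measure_pmf)
  let ?M = "measure_pmf (bernoulli_pmf (edge_prob N c e))"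
  let ?E = "{w \<in> space (edge_space N c). w e}"
  have me: "(\<lambda>w. w e) \<in> edge_space N c \<rightarrow>\<^sub>M ?M"
    unfolding edge_space_def by (rule measurable_component_singleton) (rule e)
  then have E: "?E \<in> sets (edge_space N c)" by (rule measurable_sets_Collect) simp
  have "{z \<in> space (rg_space N c). fst z e} = ?E \<times> space (tie_space N)"
    unfolding rg_space_def by (auto simp: space_pair_measure)
  then have "emeasure (rg_space N c) {z \<in> space (rg_space N c). fst z e} = emeasure (edge_space N c) ?E"
    unfolding rg_space_def using T.emeasure_pair_measure_Times[OF E] T.emeasure_space_1 by simp
  then have "measure (rg_space N c) {z \<in> space (rg_space N c). fst z e} = measure (edge_space N c) ?E"
    by (simp add: measure_def)
  also have "?E = (\<lambda>w. w e) -` {True} \<inter> space (edge_space N c)" by blast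
  also have "measure (edge_space N c) \<dots> = measure (distr (edge_space N c) ?M (\<lambda>w. w e)) {True}"
    by (rule measure_distr[symmetric, OF me]) simp
  also have "distr (edge_space N c) ?M (\<lambda>w. w e) = ?M"
    unfolding edge_space_def by (rule distr_PiM_component[OF prob_space_measure_pmf e])
  finally show ?thesis by (simp add: measure_pmf_single)
qed

lemma sum_power_greaterThanAtMost_le:
  fixes x :: real
  assumes "0 \<le> x" "x \<le> 1 / 2"
  shows "(\<Sum>d\<in>{m<..m'}. x ^ d) \<le> x ^ m"
proof -
  have "(\<Sum>d\<in>{m<..m+i}. x ^ d) \<le> x ^ m - x ^ (m + i)" for i
  proof (induction i)
    case (Suc i)
    have "{m<..m + Suc i} = insert (m + Suc i) {m<..m + i}" by auto
    then have "(\<Sum>d\<in>{m<..m + Suc i}. x ^ d) = x ^ (m + Suc i) + (\<Sum>d\<in>{m<..m + i}. x ^ d)"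
      by simp
    moreover have "2 * x ^ (m + Suc i) \<le> x ^ (m + i)"
      using mult_right_mono[of "2 * x" 1 "x ^ (m + i)"] assms by (simp add: mult.assoc)
    ultimately show ?case using Suc.IH by simp
  qed simp
  from this[of "m' - m"] assms(1) show ?thesis
    by (cases "m \<le> m'") (auto simp: not_le intro: order.trans)
qed

text \<open>Each shell \<open>{d(0,y) = d}\<close> has at most \<open>N^d\<close> points, so the weights \<open>N^(-2d)\<close> over an annulus
  sum to a geometric series with ratio \<open>1/N \<le> 1/2\<close>.\<close>

lemma sum_annulus_weight_le:
  assumes "N \<ge> 2"
  shows "(\<Sum>y\<in>annulus N m m'. (1 / real N) ^ (2 * ud zero_seq y)) \<le> (1 / real N) ^ m"
proof -
  let ?A = "annulus N m m'" and ?x = "1 / real N"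
  let ?shell = "\<lambda>d. {y \<in> ?A. ud zero_seq y = d}"
  have shell: "real (card (?shell d)) \<le> real N ^ d" for d
  proof -
    have "card (?shell d) \<le> card (zball N d)"
      by (rule card_mono[OF finite_zball]) (auto simp: annulus_def zball_def)
    then show ?thesis using card_zball_le[of N d] by (metis of_nat_le_iff of_nat_power order.trans)
  qed
  have "(\<Sum>y\<in>?A. ?x ^ (2 * ud zero_seq y)) = (\<Sum>d\<in>{m<..m'}. \<Sum>y\<in>?shell d. ?x ^ (2 * ud zero_seq y))"
    by (rule sum.group[symmetric, OF finite_annulus]) (auto simp: annulus_def)
  also have "\<dots> = (\<Sum>d\<in>{m<..m'}. real (card (?shell d)) * ?x ^ (2 * d))"
    by simp
  also have "\<dots> \<le> (\<Sum>d\<in>{m<..m'}. real N ^ d * ?x ^ (2 * d))"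
    by (intro sum_mono mult_right_mono shell) simp
  also have "\<dots> = (\<Sum>d\<in>{m<..m'}. ?x ^ d)"
  proof (rule sum.cong)
    fix d
    have "real N ^ d * ?x ^ (2 * d) = (real N * ?x) ^ d * ?x ^ d"
      by (simp only: power_mult_distrib mult_2 power_add mult.assoc)
    moreover have "real N * ?x = 1" using assms by simp
    ultimately show "real N ^ d * ?x ^ (2 * d) = ?x ^ d" by (simp only: power_one mult_1)
  qed simp
  also have "\<dots> \<le> ?x ^ m"
    by (rule sum_power_greaterThanAtMost_le) (use assms in auto)
  finally show ?thesis .
qed

lemma measure_cluster_joins_le_sum_pairs:
  assumes "N \<ge> 1" and L: "finite L" "L \<subseteq> Omega N" "zball N k \<inter> L = {}"
  shows "measure (rg_space N c) {z \<in> space (rg_space N c). cluster_joins N k L (fst z) (snd z)}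
    \<le> (\<Sum>(x, y)\<in>zball N k \<times> L. pmf (bernoulli_pmf (edge_prob N c {x, y})) True)"
proof -
  interpret P: prob_space "rg_space N c" by (rule prob_space_rg_space)
  let ?Sp = "space (rg_space N c)"
  let ?G = "(\<lambda>(x, y). {x, y}) ` (zball N k \<times> L)"
  let ?p = "\<lambda>e. pmf (bernoulli_pmf (edge_prob N c e)) True"
  have fin: "finite (zball N k \<times> L)" using finite_zball L(1) by blast
  then have finG: "finite ?G" by blast
  have GE: "?G \<subseteq> edges N"
    unfolding edges_def using L zball_subset_Omega by fastforce
  then have Gs: "{z \<in> ?Sp. fst z e} \<in> sets (rg_space N c)" if "e \<in> ?G" for e
    using sets_rg_space_edge[of e N c True] that by auto
  have "{z \<in> ?Sp. cluster_joins N k L (fst z) (snd z)} \<subseteq> (\<Union>e\<in>?G. {z \<in> ?Sp. fst z e})"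
    using cluster_subset_zball[OF assms(1)] unfolding cluster_joins_def adj_def by fastforce
  then have "measure (rg_space N c) {z \<in> ?Sp. cluster_joins N k L (fst z) (snd z)}
      \<le> (\<Sum>e\<in>?G. measure (rg_space N c) {z \<in> ?Sp. fst z e})"
    using P.finite_measure_mono measure_UNION_le[OF finG Gs] sets.finite_UN[OF finG Gs]
    by (meson order.trans)
  also have "\<dots> = (\<Sum>e\<in>?G. ?p e)"
    using GE by (intro sum.cong refl measure_rg_space_edge) auto
  also have "\<dots> \<le> (\<Sum>(x, y)\<in>zball N k \<times> L. ?p {x, y})"
    using sum_image_le[OF fin, of ?p "\<lambda>(x, y). {x, y}"] by (simp add: o_def case_prod_beta)
  finally show ?thesis .
qed

lemma pmf_edge_ball_annulus_le:
  assumes N: "N \<ge> 2" and "x \<in> zball N k" "y \<in> annulus N m m'" "k \<le> m"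
    and cs: "\<And>d. m < d \<Longrightarrow> d \<le> m' \<Longrightarrow> c d \<le> cs" and "cs \<ge> 0"
  shows "pmf (bernoulli_pmf (edge_prob N c {x, y})) True \<le> cs * (1 / real N) ^ (2 * ud zero_seq y)"
proof -
  let ?d = "ud zero_seq y"
  have h: "x \<in> Omega N" "ud zero_seq x \<le> m" "y \<in> Omega N" "m < ?d" "?d \<le> m'"
    using assms(2-4) by (auto simp: zball_def annulus_def)
  have "edge_prob N c {x, y} \<le> c ?d / real N ^ (2 * ?d)"
    unfolding edge_prob_def edist_insert_outer[OF h(1-4)] by simp
  also have "\<dots> \<le> cs * (1 / real N) ^ (2 * ?d)"
    using cs[OF h(4,5)] N by (simp add: divide_right_mono power_one_over)
  finally show ?thesis
    by (rule pmf_bernoulli_True_le) (use \<open>cs \<ge> 0\<close> in simp)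
qed

lemma measure_cluster_joins_annulus_le:
  assumes N: "N \<ge> 2" and "k \<le> m" and cs: "\<And>d. m < d \<Longrightarrow> d \<le> m' \<Longrightarrow> c d \<le> cs" and "cs \<ge> 0"
  shows "measure (rg_space N c)
      {z \<in> space (rg_space N c). cluster_joins N k (annulus N m m') (fst z) (snd z)}
    \<le> real N ^ k * cs * (1 / real N) ^ m"
proof -
  let ?B = "zball N k" and ?A = "annulus N m m'" and ?x = "1 / real N"
  have "?B \<inter> ?A = {}" using \<open>k \<le> m\<close> by (auto simp: zball_def annulus_def)
  with N have "measure (rg_space N c)
      {z \<in> space (rg_space N c). cluster_joins N k ?A (fst z) (snd z)}
    \<le> (\<Sum>(x, y)\<in>?B \<times> ?A. pmf (bernoulli_pmf (edge_prob N c {x, y})) True)"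
    by (intro measure_cluster_joins_le_sum_pairs finite_annulus annulus_subset_Omega) auto
  also have "\<dots> \<le> (\<Sum>(x, y)\<in>?B \<times> ?A. cs * ?x ^ (2 * ud zero_seq y))"
    using pmf_edge_ball_annulus_le[OF N _ _ \<open>k \<le> m\<close> cs \<open>cs \<ge> 0\<close>] by (intro sum_mono) auto
  also have "\<dots> = real (card ?B) * (cs * (\<Sum>y\<in>?A. ?x ^ (2 * ud zero_seq y)))"
    by (simp add: sum.cartesian_product[symmetric] sum_distrib_left)
  also have "\<dots> \<le> real N ^ k * (cs * ?x ^ m)"
  proof (rule mult_mono)
    show "real (card ?B) \<le> real N ^ k"
      using card_zball_le[of N k] by (metis of_nat_le_iff of_nat_power)
    show "cs * (\<Sum>y\<in>?A. ?x ^ (2 * ud zero_seq y)) \<le> cs * ?x ^ m"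
      using sum_annulus_weight_le[OF N] \<open>cs \<ge> 0\<close> by (rule mult_left_mono)
  qed (use \<open>cs \<ge> 0\<close> in \<open>auto intro!: mult_nonneg_nonneg sum_nonneg\<close>)
  finally show ?thesis by (simp only: mult.assoc)
qed

lemma kseq_mono:
  assumes "K \<ge> 0" "n \<le> m"
  shows "kseq K n \<le> kseq K m"
proof -
  have "real n * ln (real n) \<le> real m * ln (real m)"
  proof (cases "n = 0")
    case True
    then show ?thesis using assms(2) by (cases "m = 0") auto
  qed (use assms(2) in \<open>auto intro: mult_mono\<close>)
  then show ?thesis
    unfolding kseq_def using assms(1) by (intro nat_mono floor_mono) (simp add: mult_left_mono mult.assoc)
qed

lemma kseq_bounds:
  assumes "K \<ge> 0"
  shows "K * real n * ln (real n) - 1 \<le> real (kseq K n)" and "real (kseq K n) \<le> K * real n * ln (real n)"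
proof -
  have "0 \<le> K * real n * ln (real n)"
    using assms by (cases "n = 0") (auto intro!: mult_nonneg_nonneg)
  then show "K * real n * ln (real n) - 1 \<le> real (kseq K n)" "real (kseq K n) \<le> K * real n * ln (real n)"
    unfolding kseq_def by linarith+
qed

text \<open>Since \<open>k_n \<approx> K n ln n\<close>, the gap \<open>k_m - k_n\<close> is at least \<open>K (m - n) ln m - 1\<close>.\<close>

lemma power_kseq_diff_le:
  assumes N: "N \<ge> 2" and "K > 0" and "1 \<le> n" "n \<le> m"
  shows "real N ^ kseq K n * (1 / real N) ^ kseq K m
    \<le> real N * real m powr (- (K * ln (real N) * real (m - n)))"
proof -
  have Np: "real N > 0" and mp: "real m > 0" using assms by auto
  have "real (kseq K n) - real (kseq K m) \<le> 1 - K * real (m - n) * ln (real m)"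
  proof -
    have "K * real n * ln (real n) \<le> K * real n * ln (real m)"
      using assms by (intro mult_left_mono) auto
    moreover have "K * real (m - n) * ln (real m) = K * real m * ln (real m) - K * real n * ln (real m)"
      using \<open>n \<le> m\<close> by (simp add: of_nat_diff algebra_simps)
    ultimately show ?thesis
      using kseq_bounds[of K n] kseq_bounds[of K m] \<open>K > 0\<close> by linarith
  qed
  then have "real N powr (real (kseq K n) - real (kseq K m))
      \<le> real N powr (1 - K * real (m - n) * ln (real m))"
    using N by (intro powr_mono) auto
  moreover have "real N ^ kseq K n * (1 / real N) ^ kseq K m
      = real N powr (real (kseq K n) - real (kseq K m))"
    using Np by (simp add: powr_diff powr_realpow power_one_over divide_inverse power_inverse)
  moreover have "real N powr (1 - K * real (m - n) * ln (real m))
      = real N * real m powr (- (K * ln (real N) * real (m - n)))"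
  proof -
    have "real N powr (K * real (m - n) * ln (real m)) = real m powr (K * ln (real N) * real (m - n))"
      using Np mp unfolding powr_def by (simp add: mult_ac)
    then show ?thesis using Np by (simp add: powr_diff powr_minus divide_inverse)
  qed
  ultimately show ?thesis by simp
qed

lemma ln_le_powr_div:
  fixes x d :: real
  assumes "x > 0" "d > 0"
  shows "ln x \<le> x powr d / d"
proof -
  have "ln (x powr d) \<le> x powr d - 1" by (rule ln_le_minus_one) (use assms in simp)
  then show ?thesis using assms by (simp add: ln_powr field_simps)
qed

lemma ln_add_le_twice_ln:
  assumes "2 \<le> m" "i \<le> m"
  shows "ln (real (m + i)) \<le> 2 * ln (real m)"
proof -
  have "real (m + i) \<le> 2 * real m" using assms by simp
  also have "\<dots> \<le> real m * real m" using assms by (intro mult_right_mono) auto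
  finally have "ln (real (m + i)) \<le> ln (real m * real m)" using assms by simp
  also have "\<dots> = 2 * ln (real m)" using assms by (simp add: ln_mult)
  finally show ?thesis .
qed

lemma affine_ln_powr_Suc_le:
  fixes \<beta> C a :: real
  assumes "\<beta> \<ge> 0" "C \<ge> 0" "a \<ge> 0" "m \<ge> 3"
  shows "C + a * ln (real (m + 1)) * real (m + 1) powr \<beta>
    \<le> (C + 2 * 2 powr \<beta> * a) * ln (real m) * real m powr \<beta>"
proof -
  have "exp 1 \<le> (3::real)" using exp_le by linarith
  also have "\<dots> \<le> real m" using assms by simp
  finally have ln1: "1 \<le> ln (real m)" using assms by (simp add: ln_ge_iff)
  have pow1: "1 \<le> real m powr \<beta>" using assms by (simp add: ge_one_powr_ge_zero)
  have "1 \<le> ln (real m) * real m powr \<beta>" using mult_mono[OF ln1 pow1] ln1 by simp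
  then have "C \<le> C * (ln (real m) * real m powr \<beta>)"
    using mult_left_mono[OF _ \<open>C \<ge> 0\<close>] by fastforce
  moreover have "real (m + 1) powr \<beta> \<le> 2 powr \<beta> * real m powr \<beta>"
    using powr_mono2[of \<beta> "real (m + 1)" "2 * real m"] assms by (simp add: powr_mult)
  then have "a * ln (real (m + 1)) * real (m + 1) powr \<beta>
      \<le> a * (2 * ln (real m)) * (2 powr \<beta> * real m powr \<beta>)"
    using ln_add_le_twice_ln[of m 1] assms by (intro mult_mono mult_left_mono) auto
  ultimately show ?thesis by (simp add: algebra_simps)
qed

lemma measure_A_event_le:
  fixes N :: nat and K b C a :: real and c :: "nat \<Rightarrow> real"
  assumes N: "N \<ge> 2" and K: "K > 0" and "0 < b" and "C \<ge> 0" and "a > 0"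
    and c_kseq: "\<forall>n\<ge>1. c (kseq K n) = C + a * ln (real n) * real N powr (b * ln (real n))"
    and c_between: "\<forall>n\<ge>1. \<forall>j. kseq K n < j \<and> j < kseq K (n + 1) \<longrightarrow>
             c (kseq K n) \<le> c j \<and> c j \<le> c (kseq K (n + 1))"
    and n: "1 \<le> n" and j: "2 \<le> j"
  shows "measure (rg_space N c) (A_event N c K n j)
    \<le> real N * (C + 2 * 2 powr (b * ln (real N)) * a) * ln (real (n + j))
        / real (n + j) powr ((K * real j - b) * ln (real N))"
proof -
  let ?m = "n + j" and ?\<beta> = "b * ln (real N)" and ?D = "C + 2 * 2 powr (b * ln (real N)) * a"
  let ?cs = "c (kseq K (?m + 1))"
  have cs_eq: "?cs = C + a * ln (real (?m + 1)) * real (?m + 1) powr ?\<beta>"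
    using c_kseq N by (simp add: powr_def mult_ac)
  have "?cs \<ge> 0" unfolding cs_eq using assms by (intro add_nonneg_nonneg mult_nonneg_nonneg) auto
  have "measure (rg_space N c) (A_event N c K n j) \<le> real N ^ kseq K n * ?cs * (1 / real N) ^ kseq K ?m"
    unfolding A_event_eq_cluster_joins
  proof (rule measure_cluster_joins_annulus_le[OF N])
    show "kseq K n \<le> kseq K ?m" using K by (intro kseq_mono) auto
    show "c d \<le> ?cs" if "kseq K ?m < d" "d \<le> kseq K (?m + 1)" for d
      using that c_between n by (cases "d = kseq K (?m + 1)") auto
  qed (rule \<open>?cs \<ge> 0\<close>)
  also have "\<dots> = ?cs * (real N ^ kseq K n * (1 / real N) ^ kseq K ?m)" by simp
  also have "\<dots> \<le> (?D * ln (real ?m) * real ?m powr ?\<beta>) * (real N * real ?m powr (- (K * ln (real N) * real j)))"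
  proof (rule mult_mono)
    show "?cs \<le> ?D * ln (real ?m) * real ?m powr ?\<beta>"
      unfolding cs_eq using assms by (intro affine_ln_powr_Suc_le) auto
    show "real N ^ kseq K n * (1 / real N) ^ kseq K ?m \<le> real N * real ?m powr (- (K * ln (real N) * real j))"
      using power_kseq_diff_le[OF N K n, of ?m] by simp
  qed (use \<open>?cs \<ge> 0\<close> assms in \<open>auto intro!: mult_nonneg_nonneg add_nonneg_nonneg\<close>)
  also have "\<dots> = real N * ?D * ln (real ?m) * (real ?m powr ?\<beta> * real ?m powr (- (K * ln (real N) * real j)))"
    by (simp add: algebra_simps)
  also have "real ?m powr ?\<beta> * real ?m powr (- (K * ln (real N) * real j))
      = 1 / real ?m powr ((K * real j - b) * ln (real N))"
    by (simp add: powr_add[symmetric] powr_minus_divide[symmetric] algebra_simps)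
  finally show ?thesis by simp
qed

lemma limsup_ratio_le_one:
  fixes p :: "nat \<Rightarrow> real" and D e :: real
  assumes "D > 0" "e \<ge> 0" and p: "\<And>n. 1 \<le> n \<Longrightarrow> p n \<le> D * ln (real (n + j)) / real (n + j) powr e"
  shows "limsup (\<lambda>n. ereal (p n / (2 * D * ln (real n) / real n powr e))) \<le> 1"
proof (rule Limsup_bounded, unfold eventually_sequentially, intro exI allI impI)
  fix n assume "max j 2 \<le> n"
  then have n: "2 \<le> n" "j \<le> n" by auto
  have den: "0 < 2 * D * ln (real n) / real n powr e" using n \<open>D > 0\<close> by simp
  have "p n \<le> D * ln (real (n + j)) / real (n + j) powr e" using p n by simp
  also have "\<dots> \<le> D * (2 * ln (real n)) / real n powr e"
    using ln_add_le_twice_ln[OF n] n assms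
    by (intro frac_le mult_left_mono powr_mono2) auto
  finally have "p n / (2 * D * ln (real n) / real n powr e) \<le> 1"
    using den by (simp only: divide_le_eq_1_pos mult.assoc mult.left_commute)
  then show "ereal (p n / (2 * D * ln (real n) / real n powr e)) \<le> 1" by simp
qed

lemma ln_div_powr_le_geometric:
  fixes \<alpha> \<gamma> :: real
  assumes "\<alpha> > 0" "\<gamma> > 1"
  shows "ln (real (Suc n + (j + 2))) / real (Suc n + (j + 2)) powr (\<gamma> + \<alpha> * real j)
    \<le> 2 / (\<gamma> - 1) * real (Suc n) powr (- ((\<gamma> + 1) / 2)) * (2 powr - \<alpha>) ^ j"
proof -
  define m where "m = real (Suc n + (j + 2))"
  \<comment> \<open>\<open>ln m \<le> m^\<delta> / \<delta>\<close> absorbs the logarithm into half of the spare exponent \<open>\<gamma> - 1\<close>.\<close>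
  define \<delta> where "\<delta> = (\<gamma> - 1) / 2"
  have "m \<ge> 2" "real (Suc n) \<le> m" "\<delta> > 0" using assms by (auto simp: m_def \<delta>_def)
  have "ln m / m powr (\<gamma> + \<alpha> * real j) \<le> (m powr \<delta> / \<delta>) / m powr (\<gamma> + \<alpha> * real j)"
    using \<open>m \<ge> 2\<close> \<open>\<delta> > 0\<close> by (intro divide_right_mono ln_le_powr_div) auto
  also have "\<dots> = 1 / \<delta> * m powr (- (1 + \<delta>)) * m powr (- \<alpha> * real j)"
  proof -
    have e: "\<delta> - (\<gamma> + \<alpha> * real j) = - (1 + \<delta>) + - \<alpha> * real j" by (simp add: \<delta>_def field_simps)
    have "m powr \<delta> / m powr (\<gamma> + \<alpha> * real j) = m powr (\<delta> - (\<gamma> + \<alpha> * real j))"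
      by (rule powr_diff[symmetric])
    also have "\<dots> = m powr (- (1 + \<delta>)) * m powr (- \<alpha> * real j)"
      unfolding e by (rule powr_add)
    finally show ?thesis
      by (metis divide_divide_eq_left divide_divide_eq_left' mult.assoc times_divide_eq_left mult_1)
  qed
  also have "\<dots> \<le> 1 / \<delta> * real (Suc n) powr (- (1 + \<delta>)) * 2 powr (- \<alpha> * real j)"
    using \<open>m \<ge> 2\<close> \<open>real (Suc n) \<le> m\<close> \<open>\<delta> > 0\<close> \<open>\<alpha> > 0\<close>
    by (intro mult_mono mult_left_mono powr_mono2') auto
  also have "\<dots> = 2 / (\<gamma> - 1) * real (Suc n) powr (- ((\<gamma> + 1) / 2)) * (2 powr - \<alpha>) ^ j"
  proof -
    have "2 powr (- \<alpha> * real j) = (2 powr - \<alpha>) ^ j"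
      by (simp add: powr_realpow[symmetric] powr_powr)
    moreover have "1 / \<delta> = 2 / (\<gamma> - 1)" "- (1 + \<delta>) = - ((\<gamma> + 1) / 2)"
      by (simp_all add: \<delta>_def field_simps)
    ultimately show ?thesis by (simp only:)
  qed
  finally show ?thesis unfolding m_def .
qed

lemma double_series_bound:
  fixes p :: "nat \<Rightarrow> nat \<Rightarrow> real" and D \<alpha> \<gamma> :: real
  assumes "D \<ge> 0" "\<alpha> > 0" "\<gamma> > 1"
    and p: "\<And>n j. p n j \<le> D * ln (real (Suc n + (j + 2))) / real (Suc n + (j + 2)) powr (\<gamma> + \<alpha> * real j)"
  obtains f where "\<And>n j. p n j \<le> f n j" "\<And>n. summable (f n)" "summable (\<lambda>n. \<Sum>j. f n j)"
proof
  define u where "u n = D * (2 / (\<gamma> - 1) * real (Suc n) powr (- ((\<gamma> + 1) / 2)))" for n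
  define r :: real where "r = 2 powr - \<alpha>"
  have r: "0 < r" "r < 1" using \<open>\<alpha> > 0\<close> by (auto simp: r_def powr_less_one)
  show "p n j \<le> u n * r ^ j" for n j
    using p[of n j] mult_left_mono[OF ln_div_powr_le_geometric[OF \<open>\<alpha> > 0\<close> \<open>\<gamma> > 1\<close>, of n j] \<open>D \<ge> 0\<close>]
    by (simp add: u_def r_def mult.assoc)
  show "summable (\<lambda>j. u n * r ^ j)" for n
    using r by (intro summable_mult summable_geometric) simp
  have "summable (\<lambda>n. real n powr (- ((\<gamma> + 1) / 2)))"
    using \<open>\<gamma> > 1\<close> by (subst summable_real_powr_iff) simp
  then have "summable (\<lambda>n. real (Suc n) powr (- ((\<gamma> + 1) / 2)))"
    by (subst summable_Suc_iff)
  then have "summable (\<lambda>n. u n * (1 / (1 - r)))"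
    unfolding u_def by (intro summable_mult2 summable_mult)
  then show "summable (\<lambda>n. \<Sum>j. u n * r ^ j)"
    using r by (simp add: suminf_mult suminf_geometric summable_geometric)
qed

lemma
  assumes "prob_space M" and E: "\<And>n j. E n j \<in> sets M"
    and le: "\<And>n j. measure M (E n j) \<le> f n j"
    and row: "\<And>n. summable (f n)" and total: "summable (\<lambda>n. \<Sum>j. f n j)"
  shows suminf_suminf_emeasure_finite: "(\<Sum>n. \<Sum>j. emeasure M (E n j)) < \<infinity>"
    and AE_eventually_notin: "AE x in M. \<exists>n0. \<forall>n\<ge>n0. \<forall>j. x \<notin> E n j"
proof -
  interpret prob_space M by fact
  have f0: "0 \<le> f n j" for n j using le[of n j] measure_nonneg[of M "E n j"] by linarith
  have row_le: "(\<Sum>j. emeasure M (E n j)) \<le> ennreal (\<Sum>j. f n j)" for n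
  proof -
    have "(\<Sum>j. emeasure M (E n j)) \<le> (\<Sum>j. ennreal (f n j))"
      using le by (intro suminf_le) (auto simp: emeasure_eq_measure intro: ennreal_leI)
    also have "\<dots> = ennreal (\<Sum>j. f n j)" by (rule suminf_ennreal2[OF f0 row])
    finally show ?thesis .
  qed
  have "(\<Sum>n. \<Sum>j. emeasure M (E n j)) \<le> (\<Sum>n. ennreal (\<Sum>j. f n j))"
    using row_le by (intro suminf_le) auto
  also have "\<dots> = ennreal (\<Sum>n. \<Sum>j. f n j)"
    using f0 row total by (intro suminf_ennreal2 suminf_nonneg) auto
  finally show "(\<Sum>n. \<Sum>j. emeasure M (E n j)) < \<infinity>" by (simp add: le_less_trans)
  define F where "F n = (\<Union>j. E n j)" for n
  have F: "F n \<in> sets M" for n unfolding F_def using E by blast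
  have "measure M (F n) \<le> (\<Sum>j. f n j)" for n
  proof -
    have "emeasure M (F n) \<le> (\<Sum>j. emeasure M (E n j))"
      unfolding F_def using E by (intro emeasure_subadditive_countably) auto
    then show ?thesis
      unfolding measure_def using row_le order.trans suminf_nonneg[OF row f0] by (metis enn2real_leI)
  qed
  then have "summable (\<lambda>n. measure M (F n))"
    by (intro summable_comparison_test'[OF total, of 0]) auto
  then have "AE x in M. eventually (\<lambda>n. x \<in> space M - F n) sequentially"
    using F by (intro borel_cantelli_AE1) (auto simp: emeasure_eq_measure)
  then show "AE x in M. \<exists>n0. \<forall>n\<ge>n0. \<forall>j. x \<notin> E n j"
    by (rule AE_mp, intro AE_I2 impI) (auto simp: F_def eventually_sequentially)
qed

lemma AE_no_cluster_edges_to_far_annuli: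
  assumes "AE wt in rg_space N c. \<exists>n0. \<forall>n\<ge>n0. \<forall>j. wt \<notin> A_event N c K (Suc n) (j + 2)"
  shows "AE wt in rg_space N c. \<exists>n0. \<forall>n\<ge>n0. \<forall>j\<ge>2.
    \<forall>x \<in> cluster N (fst wt) (snd wt) (kseq K n) \<inter> annulus N (kseq K (n - 1)) (kseq K n).
    \<forall>y \<in> annulus N (kseq K (n + j)) (kseq K (n + j + 1)). \<not> adj (fst wt) x y"
  using assms
proof (rule AE_mp, intro AE_I2 impI)
  fix wt assume wt: "wt \<in> space (rg_space N c)"
  assume "\<exists>n0. \<forall>n\<ge>n0. \<forall>j. wt \<notin> A_event N c K (Suc n) (j + 2)"
  then obtain n0 where n0: "\<And>n j. n \<ge> n0 \<Longrightarrow> wt \<notin> A_event N c K (Suc n) (j + 2)" by blast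
  show "\<exists>n0. \<forall>n\<ge>n0. \<forall>j\<ge>2.
    \<forall>x \<in> cluster N (fst wt) (snd wt) (kseq K n) \<inter> annulus N (kseq K (n - 1)) (kseq K n).
    \<forall>y \<in> annulus N (kseq K (n + j)) (kseq K (n + j + 1)). \<not> adj (fst wt) x y"
  proof (intro exI[of _ "Suc n0"] allI impI ballI notI)
    fix n j x y
    assume "Suc n0 \<le> n" "2 \<le> j"
      and "x \<in> cluster N (fst wt) (snd wt) (kseq K n) \<inter> annulus N (kseq K (n - 1)) (kseq K n)"
      and "y \<in> annulus N (kseq K (n + j)) (kseq K (n + j + 1))" and "adj (fst wt) x y"
    then have "\<exists>x \<in> cluster N (fst wt) (snd wt) (kseq K n).
        \<exists>y \<in> annulus N (kseq K (n + j)) (kseq K (n + j + 1)). adj (fst wt) x y" by blast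
    then have "(fst wt, snd wt) \<in> A_event N c K n j"
      using wt unfolding A_event_def by (cases wt) simp
    moreover have "n0 \<le> n - 1" "Suc (n - 1) = n" "j - 2 + 2 = j"
      using \<open>Suc n0 \<le> n\<close> \<open>2 \<le> j\<close> by auto
    ultimately show False using n0[of "n - 1" "j - 2"] by simp
  qed
qed

locale intensity_profile =
  fixes N :: nat and K b C a :: real and c :: "nat \<Rightarrow> real"
  assumes N: "N \<ge> 2" and K: "K > 0"
    and b: "0 < b" "b < 2 * K - 1 / ln (real N)"
    and C: "C \<ge> 0" and a: "a > 0"
    and c_kseq: "\<forall>n\<ge>1. c (kseq K n) = C + a * ln (real n) * real N powr (b * ln (real n))"
    and c_between: "\<forall>n\<ge>1. \<forall>j. kseq K n < j \<and> j < kseq K (n + 1) \<longrightarrow>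
             c (kseq K n) \<le> c j \<and> c j \<le> c (kseq K (n + 1))"
begin

definition amplitude :: real where
  "amplitude = real N * (C + 2 * 2 powr (b * ln (real N)) * a)"

lemma amplitude_pos: "amplitude > 0"
  using N C a unfolding amplitude_def by (intro mult_pos_pos add_nonneg_pos) auto

lemma ln_N_pos: "ln (real N) > 0"
  using N by simp

lemma decay_exponent_gt_one: "(2 * K - b) * ln (real N) > 1"
proof -
  have "b * ln (real N) < (2 * K - 1 / ln (real N)) * ln (real N)"
    by (rule mult_strict_right_mono[OF b(2) ln_N_pos])
  then show ?thesis using ln_N_pos by (simp add: algebra_simps)
qed

lemma measure_A_event_le_amplitude:
  assumes "1 \<le> n" "2 \<le> j"
  shows "measure (rg_space N c) (A_event N c K n j)
    \<le> amplitude * ln (real (n + j)) / real (n + j) powr ((K * real j - b) * ln (real N))"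
  unfolding amplitude_def
  using measure_A_event_le[OF N K b(1) C a c_kseq c_between assms] by (simp add: mult.assoc)

lemma limsup_A_event_ratio_le_one:
  "\<exists>M>0. \<forall>j\<ge>2. limsup (\<lambda>n. ereal (measure (rg_space N c) (A_event N c K n j) /
      (M * ln (real n) / real n powr ((K * real j - b) * ln (real N))))) \<le> 1"
proof (intro exI[of _ "2 * amplitude"] conjI allI impI)
  fix j :: nat assume "2 \<le> j"
  have "(2 * K - b) * ln (real N) > 0" using decay_exponent_gt_one by linarith
  then have "2 * K - b > 0" using ln_N_pos by (simp add: zero_less_mult_iff)
  moreover have "2 * K \<le> K * real j" using \<open>2 \<le> j\<close> K by simp
  ultimately have "0 \<le> (K * real j - b) * ln (real N)" using ln_N_pos by simp
  then show "limsup (\<lambda>n. ereal (measure (rg_space N c) (A_event N c K n j) /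
      (2 * amplitude * ln (real n) / real n powr ((K * real j - b) * ln (real N))))) \<le> 1"
    by (rule limsup_ratio_le_one[OF amplitude_pos _ measure_A_event_le_amplitude[OF _ \<open>2 \<le> j\<close>]])
qed (use amplitude_pos in simp)

lemma A_event_double_series_bound:
  obtains f where "\<And>n j. measure (rg_space N c) (A_event N c K (Suc n) (j + 2)) \<le> f n j"
    and "\<And>n. summable (f n)" and "summable (\<lambda>n. \<Sum>j. f n j)"
proof (rule double_series_bound[of amplitude "K * ln (real N)" "(2 * K - b) * ln (real N)"])
  show "measure (rg_space N c) (A_event N c K (Suc n) (j + 2)) \<le> amplitude * ln (real (Suc n + (j + 2)))
      / real (Suc n + (j + 2)) powr ((2 * K - b) * ln (real N) + K * ln (real N) * real j)" for n j
    using measure_A_event_le_amplitude[of "Suc n" "j + 2"] by (simp add: algebra_simps)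
qed (use amplitude_pos K ln_N_pos decay_exponent_gt_one in auto)

end

theorem lemma5p2:
  fixes N :: nat and K b C a :: real and c :: "nat \<Rightarrow> real"
  assumes "N \<ge> 2" and "K > 0"
    and "0 < b" and "b < 2 * K - 1 / ln (real N)"
    and "C \<ge> 0" and "a > 0"
    and "\<forall>n\<ge>1. c (kseq K n) = C + a * ln (real n) * real N powr (b * ln (real n))"
    and "\<forall>n\<ge>1. \<forall>j. kseq K n < j \<and> j < kseq K (n + 1) \<longrightarrow>
             c (kseq K n) \<le> c j \<and> c j \<le> c (kseq K (n + 1))"
  shows "(\<forall>n j. A_event N c K n j \<in> sets (rg_space N c))
    \<and> (\<exists>M>0. \<forall>j\<ge>2.
         limsup (\<lambda>n. ereal (measure (rg_space N c) (A_event N c K n j) /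
            (M * ln (real n) / real n powr ((K * real j - b) * ln (real N))))) \<le> 1)
    \<and> (\<Sum>n. \<Sum>j. emeasure (rg_space N c) (A_event N c K (Suc n) (j + 2))) < \<infinity>
    \<and> (AE wt in rg_space N c. \<exists>n0. \<forall>n\<ge>n0. \<forall>j\<ge>2.
         \<forall>x \<in> cluster N (fst wt) (snd wt) (kseq K n) \<inter> annulus N (kseq K (n - 1)) (kseq K n).
         \<forall>y \<in> annulus N (kseq K (n + j)) (kseq K (n + j + 1)). \<not> adj (fst wt) x y)"
proof -
  interpret intensity_profile N K b C a c
    using assms by unfold_locales
  have A: "A_event N c K n j \<in> sets (rg_space N c)" for n j
    using assms(1) by (intro sets_A_event) simp
  obtain f where f: "\<And>n j. measure (rg_space N c) (A_event N c K (Suc n) (j + 2)) \<le> f n j"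
    and row: "\<And>n. summable (f n)" and total: "summable (\<lambda>n. \<Sum>j. f n j)"
    using A_event_double_series_bound by blast
  show ?thesis
    using A limsup_A_event_ratio_le_one
      suminf_suminf_emeasure_finite[OF prob_space_rg_space A f row total]
      AE_no_cluster_edges_to_far_annuli[OF AE_eventually_notin[OF prob_space_rg_space A f row total]]
    by blast
qed

end
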